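(* Let $X$ be a finite discrete space with at least two elements, $\Gamma$ a nonempty countable set, and $\varphi:\Gamma\to\Gamma$ one-to-one without periodic points. Then $X^\Gamma$ has an uncountable subset $M$ consisting of transitive points of $\sigma_\varphi$, and there exists $r>0$ such that for all distinct $x,y\in M$: $F^*_{xy}(t)=1$ for every $t>0$, and $F_{xy}(r)=0$.
   Context: $X^\Gamma$ has the product topology and a fixed compatible metric $d$; $\sigma_\varphi((x_\alpha)_{\alpha\in\Gamma})=(x_{\varphi(\alpha)})_{\alpha\in\Gamma}$. A point $x$ is a transitive point if $\{\sigma_\varphi^n(x):n\ge0\}$ is dense in $X^\Gamma$. With $f=\sigma_\varphi$, $\xi(x,y,t,n)=\#\{i\in\{0,\dots,n-1\}:d(f^i(x),f^i(y))<t\}$, $F_{xy}(t)=\liminf_n\xi(x,y,t,n)/n$, $F^*_{xy}(t)=\limsup_n\xi(x,y,t,n)/n$. *)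

theory Defs
  imports "HOL-Analysis.Analysis"
begin

definition shift_map :: "'g set \<Rightarrow> ('g \<Rightarrow> 'g) \<Rightarrow> ('g \<Rightarrow> 'x) \<Rightarrow> ('g \<Rightarrow> 'x)" where
  "shift_map G phi x = (\<lambda>\<alpha>\<in>G. x (phi \<alpha>))"

definition xi :: "('a \<Rightarrow> 'a \<Rightarrow> real) \<Rightarrow> ('a \<Rightarrow> 'a) \<Rightarrow> 'a \<Rightarrow> 'a \<Rightarrow> real \<Rightarrow> nat \<Rightarrow> nat" where
  "xi d f x y t n = card {i \<in> {..<n}. d ((f ^^ i) x) ((f ^^ i) y) < t}"

definition F_lower :: "('a \<Rightarrow> 'a \<Rightarrow> real) \<Rightarrow> ('a \<Rightarrow> 'a) \<Rightarrow> 'a \<Rightarrow> 'a \<Rightarrow> real \<Rightarrow> ereal" where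
  "F_lower d f x y t = liminf (\<lambda>n. ereal (real (xi d f x y t n) / real n))"

definition F_upper :: "('a \<Rightarrow> 'a \<Rightarrow> real) \<Rightarrow> ('a \<Rightarrow> 'a) \<Rightarrow> 'a \<Rightarrow> 'a \<Rightarrow> real \<Rightarrow> ereal" where
  "F_upper d f x y t = limsup (\<lambda>n. ereal (real (xi d f x y t n) / real n))"

definition transitive_point :: "'a topology \<Rightarrow> ('a \<Rightarrow> 'a) \<Rightarrow> 'a \<Rightarrow> bool" where
  "transitive_point T f x \<longleftrightarrow> T closure_of {(f ^^ n) x | n. True} = topspace T"

end

theory Submission
  imports Defs "HOL-Real_Asymp.Real_Asymp"
begin

text \<open>Fix \<open>\<alpha>0 \<in> \<Gamma>\<close> and letters \<open>a \<noteq> b\<close>. A bit sequence \<open>s\<close> is coded into a point \<open>x\<^sub>s\<close> that carries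
  \<open>a\<close> or \<open>b\<close>, according to the bit \<open>s i\<close>, at the positions \<open>\<phi>\<^sup>m \<alpha>0\<close> with \<open>m\<close> in an odd factorial block
  \<open>[(2k+1)!, (2k+2)!)\<close>, where \<open>k\<close> encodes a pair \<open>(i, j)\<close>; everywhere else all the \<open>x\<^sub>s\<close> agree with
  one background point. Injectivity and aperiodicity of \<open>\<phi>\<close> let the background realize every finite
  pattern at some time whose relevant orbit positions avoid the odd blocks, so every \<open>x\<^sub>s\<close> is
  transitive. Each factorial block dominates all earlier time: during most of every even block two
  coded points agree on any given finite window and so are close (\<open>F* = 1\<close>), while during most of
  the infinitely many odd blocks coding a bit where they differ they differ at \<open>\<alpha>0\<close> and so, by
  compactness, are \<open>r\<close>-apart (\<open>F = 0\<close>).\<close>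

lemma limsup_ereal_eq_if_subseq_tendsto:
  fixes u :: "nat \<Rightarrow> real"
  assumes "\<And>n. u n \<le> c" and "strict_mono r" and "(\<lambda>k. u (r k)) \<longlonglongrightarrow> c"
  shows "limsup (\<lambda>n. ereal (u n)) = ereal c"
proof (rule antisym)
  show "limsup (\<lambda>n. ereal (u n)) \<le> ereal c"
    using assms(1) by (intro Limsup_bounded) auto
  have "limsup ((\<lambda>n. ereal (u n)) \<circ> r) = ereal c"
    using assms(3) by (intro lim_imp_Limsup) (simp_all add: comp_def)
  then show "ereal c \<le> limsup (\<lambda>n. ereal (u n))"
    using limsup_subseq_mono[OF assms(2)] by metis
qed

lemma liminf_ereal_eq_if_subseq_tendsto:
  fixes u :: "nat \<Rightarrow> real"
  assumes "\<And>n. c \<le> u n" and "strict_mono r" and "(\<lambda>k. u (r k)) \<longlonglongrightarrow> c"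
  shows "liminf (\<lambda>n. ereal (u n)) = ereal c"
proof (rule antisym)
  show "ereal c \<le> liminf (\<lambda>n. ereal (u n))"
    using assms(1) by (intro Liminf_bounded) auto
  have "liminf ((\<lambda>n. ereal (u n)) \<circ> r) = ereal c"
    using assms(3) by (intro lim_imp_Liminf) (simp_all add: comp_def)
  then show "liminf (\<lambda>n. ereal (u n)) \<le> ereal c"
    using liminf_subseq_mono[OF assms(2)] by metis
qed

lemma card_le_xi:
  "S \<subseteq> {..<n} \<Longrightarrow> (\<And>i. i \<in> S \<Longrightarrow> d ((f ^^ i) x) ((f ^^ i) y) < t) \<Longrightarrow> card S \<le> xi d f x y t n"
  unfolding xi_def by (intro card_mono) auto

lemma xi_le_card:
  "finite S \<Longrightarrow> (\<And>i. i < n \<Longrightarrow> d ((f ^^ i) x) ((f ^^ i) y) < t \<Longrightarrow> i \<in> S) \<Longrightarrow> xi d f x y t n \<le> card S"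
  unfolding xi_def by (intro card_mono) auto

lemma xi_ratio_le_1: "real (xi d f x y t n) / real n \<le> 1"
  using xi_le_card[of "{..<n}" n d f x y t] by (cases "n = 0") auto

lemma strict_mono_fact_odd: "strict_mono (\<lambda>k. fact (2*k+1) :: nat)"
  by (rule strict_mono_Suc_iff[THEN iffD2]) (auto intro: fact_less_mono_nat)

lemma strict_mono_fact_coding_block: "strict_mono (\<lambda>j. fact (2 * prod_encode (i, j) + 2) :: nat)"
proof (rule strict_mono_Suc_iff[THEN iffD2], rule allI)
  fix j
  have "prod_encode (i, j) < prod_encode (i, Suc j)"
    by (simp add: prod_encode_def)
  then show "fact (2 * prod_encode (i, j) + 2) < (fact (2 * prod_encode (i, Suc j) + 2) :: nat)"
    by (intro fact_less_mono_nat) simp_all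
qed

lemma uncountable_UNIV_nat_bool: "uncountable (UNIV :: (nat \<Rightarrow> bool) set)"
proof
  assume "countable (UNIV :: (nat \<Rightarrow> bool) set)"
  then obtain n where "from_nat_into UNIV n = (\<lambda>k. \<not> from_nat_into UNIV k k)"
    by (metis from_nat_into_surj UNIV_I)
  then have "from_nat_into UNIV n n = (\<not> from_nat_into UNIV n n)"
    by (rule fun_cong)
  then show False
    by simp
qed

locale aperiodic_injection =
  fixes G :: "'g set" and phi :: "'g \<Rightarrow> 'g"
  assumes maps_to: "phi ` G \<subseteq> G" and inj: "inj_on phi G"
    and aperiodic: "\<forall>\<alpha>\<in>G. \<forall>n::nat. n \<ge> 1 \<longrightarrow> (phi ^^ n) \<alpha> \<noteq> \<alpha>"
begin

lemma funpow_in: "\<alpha> \<in> G \<Longrightarrow> (phi ^^ n) \<alpha> \<in> G"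
  by (induction n) (use maps_to in auto)

lemma inj_on_funpow: "inj_on (phi ^^ n) G"
proof (induction n)
  case (Suc n)
  have "inj_on phi ((phi ^^ n) ` G)"
    using inj by (rule inj_on_subset) (auto intro: funpow_in)
  with Suc show ?case
    using comp_inj_on[of "phi ^^ n" G phi] by (simp add: comp_def)
qed simp

lemma funpow_neq_funpow:
  assumes "\<alpha> \<in> G" "a < b"
  shows "(phi ^^ a) \<alpha> \<noteq> (phi ^^ b) \<alpha>"
proof
  assume "(phi ^^ a) \<alpha> = (phi ^^ b) \<alpha>"
  also have "(phi ^^ b) \<alpha> = (phi ^^ a) ((phi ^^ (b - a)) \<alpha>)"
    using assms(2) funpow_add[of a "b - a" phi] by simp
  finally have "(phi ^^ (b - a)) \<alpha> = \<alpha>"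
    using assms(1) inj_on_funpow[of a] funpow_in by (auto dest: inj_onD)
  with assms aperiodic show False
    by simp
qed

lemma inj_orbit: "\<alpha> \<in> G \<Longrightarrow> inj (\<lambda>n. (phi ^^ n) \<alpha>)"
  by (rule injI) (metis funpow_neq_funpow linorder_neqE_nat)

lemma eventually_avoids_finite:
  assumes "finite F" "F \<subseteq> G" "finite B"
  obtains N where "\<And>n \<beta>. N \<le> n \<Longrightarrow> \<beta> \<in> F \<Longrightarrow> (phi ^^ n) \<beta> \<notin> B"
proof -
  have "finite (\<Union>\<beta>\<in>F. (\<lambda>n. (phi ^^ n) \<beta>) -` B)"
    using assms inj_orbit by (auto intro: finite_vimageI)
  then obtain N where "(\<Union>\<beta>\<in>F. (\<lambda>n. (phi ^^ n) \<beta>) -` B) \<subseteq> {..<N}"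
    using finite_nat_bounded by blast
  then show thesis
    by (intro that[of N]) fastforce
qed

text \<open>Two orbits that meet stay together, so the difference of the meeting times is constant.\<close>
lemma meeting_times_offset:
  assumes "\<beta> \<in> G" "\<alpha> \<in> G"
    and "(phi ^^ n) \<beta> = (phi ^^ m) \<alpha>" "(phi ^^ n') \<beta> = (phi ^^ m') \<alpha>"
  shows "n + m' = n' + m"
proof -
  have "(phi ^^ (n + m')) \<beta> = (phi ^^ (m + m')) \<alpha>"
    using assms(3) by (metis funpow_add add.commute comp_apply)
  moreover have "(phi ^^ (n' + m)) \<beta> = (phi ^^ (m + m')) \<alpha>"
    using assms(4) by (metis funpow_add add.commute comp_apply)
  ultimately show ?thesis
    using injD[OF inj_orbit[OF assms(1)], of "n + m'" "n' + m"] by simp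
qed

lemma bounded_meeting_offsets:
  assumes "finite F" "F \<subseteq> G" "\<alpha> \<in> G"
  obtains C where "\<And>\<beta> n m. \<beta> \<in> F \<Longrightarrow> (phi ^^ n) \<beta> = (phi ^^ m) \<alpha> \<Longrightarrow> n \<le> m + C \<and> m \<le> n + C"
proof -
  have "\<exists>C. \<forall>n m. (phi ^^ n) \<beta> = (phi ^^ m) \<alpha> \<longrightarrow> n \<le> m + C \<and> m \<le> n + C" if "\<beta> \<in> F" for \<beta>
  proof (cases "\<exists>n0 m0. (phi ^^ n0) \<beta> = (phi ^^ m0) \<alpha>")
    case True
    then obtain n0 m0 where meet: "(phi ^^ n0) \<beta> = (phi ^^ m0) \<alpha>"
      by blast
    have "n \<le> m + (n0 + m0) \<and> m \<le> n + (n0 + m0)" if "(phi ^^ n) \<beta> = (phi ^^ m) \<alpha>" for n m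
      using meeting_times_offset[OF _ assms(3) meet that] \<open>\<beta> \<in> F\<close> assms(2) by auto
    then show ?thesis
      by blast
  qed auto
  then obtain C where C: "\<And>\<beta> n m. \<beta> \<in> F \<Longrightarrow> (phi ^^ n) \<beta> = (phi ^^ m) \<alpha> \<Longrightarrow> n \<le> m + C \<beta> \<and> m \<le> n + C \<beta>"
    by metis
  have "C \<beta> \<le> sum C F" if "\<beta> \<in> F" for \<beta>
    using assms(1) that by (intro member_le_sum) auto
  then show thesis
    using C by (intro that[of "sum C F"]) (meson add_left_mono order_trans)
qed

lemma funpow_shift_map:
  "x \<in> extensional G \<Longrightarrow> (shift_map G phi ^^ n) x = (\<lambda>\<alpha>\<in>G. x ((phi ^^ n) \<alpha>))"
proof (induction n)
  case (Suc n)
  have "(shift_map G phi ^^ Suc n) x = shift_map G phi (\<lambda>\<alpha>\<in>G. x ((phi ^^ n) \<alpha>))"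
    by (simp only: funpow.simps comp_apply Suc.IH[OF Suc.prems])
  also have "\<dots> = (\<lambda>\<alpha>\<in>G. x ((phi ^^ Suc n) \<alpha>))"
    using maps_to by (auto simp: shift_map_def funpow_swap1 intro!: restrict_ext)
  finally show ?case .
qed (simp add: extensional_restrict)

lemma funpow_shift_map_in:
  "x \<in> PiE G (\<lambda>_. X) \<Longrightarrow> (shift_map G phi ^^ n) x \<in> PiE G (\<lambda>_. X)"
  by (auto simp: funpow_shift_map PiE_iff funpow_in)

end

locale discrete_product =
  fixes I :: "'i set" and X :: "'x set"
begin

abbreviation cube :: "('i \<Rightarrow> 'x) set" where
  "cube \<equiv> PiE I (\<lambda>_. X)"

abbreviation prod_top :: "('i \<Rightarrow> 'x) topology" where
  "prod_top \<equiv> product_topology (\<lambda>_. discrete_topology X) I"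

definition cylinder :: "('i \<Rightarrow> 'x) \<Rightarrow> 'i set \<Rightarrow> ('i \<Rightarrow> 'x) set" where
  "cylinder x F = {y \<in> cube. \<forall>i\<in>F. y i = x i}"

lemma openin_cylinder:
  assumes "x \<in> cube" "finite F" "F \<subseteq> I"
  shows "openin prod_top (cylinder x F)"
proof -
  have "cylinder x F = PiE I (\<lambda>i. if i \<in> F then {x i} else X)"
    using assms by (auto simp: cylinder_def PiE_iff extensional_def split: if_splits)
  moreover have "finite {i \<in> I. (if i \<in> F then {x i} else X) \<noteq> X}"
    using assms(2) by (rule rev_finite_subset) auto
  ultimately show ?thesis
    using assms(1) by (auto simp: openin_PiE_gen PiE_iff)
qed

lemma open_contains_cylinder:
  assumes "openin prod_top T" "x \<in> T"
  obtains F where "finite F" "F \<subseteq> I" "cylinder x F \<subseteq> T"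
proof -
  obtain U where U: "finite {i \<in> I. U i \<noteq> X}" "x \<in> PiE I U" "PiE I U \<subseteq> T"
    using assms unfolding openin_product_topology_alt by auto
  have "cylinder x {i \<in> I. U i \<noteq> X} \<subseteq> PiE I U"
    using U(2) by (auto simp: cylinder_def PiE_iff extensional_def)
  with U show thesis
    by (intro that[of "{i \<in> I. U i \<noteq> X}"]) auto
qed

end

locale discrete_product_metric = discrete_product I X + Metric_space "PiE I (\<lambda>_. X)" d
  for I :: "'i set" and X :: "'x set" and d +
  assumes finite_alphabet: "finite X"
    and mtopology_eq: "mtopology = product_topology (\<lambda>_. discrete_topology X) I"
begin

lemma compact_space_mtopology: "compact_space mtopology"
  by (simp add: mtopology_eq compact_space_product_topology compact_space_discrete_topology finite_alphabet)

lemma agreement_imp_dist_less: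
  assumes "t > 0"
  obtains F where "finite F" "F \<subseteq> I"
    "\<And>x y. x \<in> cube \<Longrightarrow> y \<in> cube \<Longrightarrow> (\<forall>i\<in>F. x i = y i) \<Longrightarrow> d x y < t"
proof -
  have "\<exists>F. finite F \<and> F \<subseteq> I \<and> cylinder x F \<subseteq> mball x (t/2)" if "x \<in> cube" for x
    using open_contains_cylinder[of "mball x (t/2)" x] that assms mtopology_eq
    by (metis centre_in_mball_iff half_gt_zero openin_mball)
  then obtain Fx where Fx: "\<And>x. x \<in> cube \<Longrightarrow> finite (Fx x) \<and> Fx x \<subseteq> I \<and> cylinder x (Fx x) \<subseteq> mball x (t/2)"
    by metis
  have "compactin mtopology cube"
    using compact_space_mtopology by (simp add: compact_space_def)
  moreover have "\<forall>C\<in>(\<lambda>x. cylinder x (Fx x)) ` cube. openin mtopology C"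
    using Fx openin_cylinder mtopology_eq by auto
  moreover have "cube \<subseteq> \<Union> ((\<lambda>x. cylinder x (Fx x)) ` cube)"
    by (auto simp: cylinder_def)
  ultimately obtain \<C> where \<C>: "finite \<C>" "\<C> \<subseteq> (\<lambda>x. cylinder x (Fx x)) ` cube" "cube \<subseteq> \<Union> \<C>"
    unfolding compactin_def by meson
  obtain S where S: "S \<subseteq> cube" "finite S" "\<C> = (\<lambda>x. cylinder x (Fx x)) ` S"
    using finite_subset_image[OF \<C>(1,2)] by blast
  show thesis
  proof (rule that[of "\<Union> (Fx ` S)"])
    show "finite (\<Union> (Fx ` S))" "\<Union> (Fx ` S) \<subseteq> I"
      using S Fx by blast+
    fix x y assume x: "x \<in> cube" and y: "y \<in> cube" and agree: "\<forall>i\<in>\<Union> (Fx ` S). x i = y i"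
    then obtain w where w: "w \<in> S" "x \<in> cylinder w (Fx w)"
      using S(3) \<C>(3) by blast
    then have "y \<in> cylinder w (Fx w)"
      using agree y by (auto simp: cylinder_def)
    moreover have "w \<in> cube"
      using w S(1) by blast
    moreover have "cylinder w (Fx w) \<subseteq> mball w (t/2)"
      using Fx[OF \<open>w \<in> cube\<close>] by blast
    ultimately have "x \<in> mball w (t/2)" "y \<in> mball w (t/2)"
      using w(2) by blast+
    then have "d w x < t/2" "d w y < t/2"
      by simp_all
    moreover have "d x y \<le> d w x + d w y"
      using triangle[of x w y] commute[of x w] x y \<open>w \<in> cube\<close> by simp
    ultimately show "d x y < t"
      by linarith
  qed
qed

text \<open>Each coordinate projection is continuous into the discrete metric on the alphabet, hence
  uniformly continuous.\<close>
lemma coordinate_separation: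
  assumes "i \<in> I"
  obtains r where "r > 0" "\<And>x y. x \<in> cube \<Longrightarrow> y \<in> cube \<Longrightarrow> x i \<noteq> y i \<Longrightarrow> r \<le> d x y"
proof -
  interpret disc: discrete_metric X .
  have "continuous_map mtopology (discrete_topology X) (\<lambda>x. x i)"
    unfolding mtopology_eq using assms by (rule continuous_map_product_projection)
  then have "uniformly_continuous_map (metric (cube, d)) (metric (X, disc.dd)) (\<lambda>x. x i)"
    using compact_space_mtopology
    by (intro continuous_imp_uniformly_continuous_map)
       (simp add: Metric_space.mtopology_of[OF metric_M_dd] disc.mtopology_discrete_metric)
  then have "\<exists>\<delta>>0. \<forall>x\<in>cube. \<forall>y\<in>cube. d y x < \<delta> \<longrightarrow> disc.dd (y i) (x i) < 1"
    unfolding uniformly_continuous_map_def by (simp add: Metric_space.mdist_metric[OF metric_M_dd])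
  then obtain \<delta> where "\<delta> > 0" and \<delta>: "\<And>x y. x \<in> cube \<Longrightarrow> y \<in> cube \<Longrightarrow> d y x < \<delta> \<Longrightarrow> disc.dd (y i) (x i) < 1"
    by blast
  show thesis
  proof (rule that[OF \<open>\<delta> > 0\<close>])
    fix x y assume "x \<in> cube" "y \<in> cube" "x i \<noteq> y i"
    then show "\<delta> \<le> d x y"
      using \<delta>[of x y] by (force simp: disc.dd_def commute)
  qed
qed

end

definition odd_time :: "nat \<Rightarrow> bool" where
  "odd_time m \<longleftrightarrow> (\<exists>k. fact (2*k+1) \<le> m \<and> m < fact (2*k+2))"

definition block_index :: "nat \<Rightarrow> nat" where
  "block_index m = (LEAST k. m < fact (2*k+2))"

lemma odd_timeI: "fact (2*k+1) \<le> m \<Longrightarrow> m < fact (2*k+2) \<Longrightarrow> odd_time m"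
  unfolding odd_time_def by blast

lemma block_index_eq:
  assumes "fact (2*k+1) \<le> m" "m < fact (2*k+2)"
  shows "block_index m = k"
  unfolding block_index_def
proof (rule Least_equality)
  fix k' assume "m < fact (2*k'+2)"
  moreover have "fact (2*k'+2) \<le> (fact (2*k+1) :: nat)" if "k' < k"
    using that by (intro fact_mono) simp
  ultimately show "k \<le> k'"
    using assms(1) by (meson leD leI order_trans)
qed (rule assms(2))

lemma not_odd_time:
  assumes "fact (2*k) \<le> m" "m < fact (2*k+1)"
  shows "\<not> odd_time m"
proof
  assume "odd_time m"
  then obtain k' where k': "fact (2*k'+1) \<le> m" "m < fact (2*k'+2)"
    unfolding odd_time_def by blast
  show False
  proof (cases "k \<le> k'")
    case True
    then have "fact (2*k+1) \<le> (fact (2*k'+1) :: nat)"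
      by (intro fact_mono) simp
    then show False
      using assms k' by linarith
  next
    case False
    then have "fact (2*k'+2) \<le> (fact (2*k) :: nat)"
      by (intro fact_mono) simp
    then show False
      using assms k' by linarith
  qed
qed

locale orbit_coding = aperiodic_injection G phi + discrete_product_metric G X d
  for G :: "'g set" and phi :: "'g \<Rightarrow> 'g" and X :: "'x set" and d +
  fixes \<alpha>0 :: 'g and a b :: 'x
  assumes countable_domain: "countable G" and \<alpha>0_in: "\<alpha>0 \<in> G"
    and a_in: "a \<in> X" and b_in: "b \<in> X" and a_neq_b: "a \<noteq> b"
begin

definition patterns :: "('g set \<times> ('g \<Rightarrow> 'x)) set" where
  "patterns = (SIGMA F:{F. finite F \<and> F \<subseteq> G}. PiE F (\<lambda>_. X))"

definition pattern :: "nat \<Rightarrow> 'g set \<times> ('g \<Rightarrow> 'x)" where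
  "pattern = from_nat_into patterns"

abbreviation pat_dom :: "nat \<Rightarrow> 'g set" where
  "pat_dom j \<equiv> fst (pattern j)"

abbreviation pat_word :: "nat \<Rightarrow> 'g \<Rightarrow> 'x" where
  "pat_word j \<equiv> snd (pattern j)"

lemma countable_patterns: "countable patterns"
  unfolding patterns_def using countable_domain finite_alphabet
  by (intro countable_SIGMA countable_Collect_finite_subset) (auto intro!: countable_finite finite_PiE)

lemma pattern_in: "pattern j \<in> patterns"
proof -
  have "({}, \<lambda>_. undefined) \<in> patterns"
    by (simp add: patterns_def)
  then show ?thesis
    unfolding pattern_def by (metis empty_iff from_nat_into)
qed

lemma finite_pat_dom: "finite (pat_dom j)" and pat_dom_subset: "pat_dom j \<subseteq> G"
  and pat_word_in: "\<beta> \<in> pat_dom j \<Longrightarrow> pat_word j \<beta> \<in> X"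
  using pattern_in[of j] by (auto simp: patterns_def PiE_iff)

lemma pattern_surj: "p \<in> patterns \<Longrightarrow> \<exists>j. pattern j = p"
  unfolding pattern_def by (metis countable_patterns from_nat_into_surj)

definition avoids_odd_times :: "'g set \<Rightarrow> nat \<Rightarrow> bool" where
  "avoids_odd_times F n \<longleftrightarrow> (\<forall>\<beta>\<in>F. \<forall>m. (phi ^^ n) \<beta> = (phi ^^ m) \<alpha>0 \<longrightarrow> \<not> odd_time m)"

lemma avoids_odd_times_in_even_blocks:
  assumes "finite F" "F \<subseteq> G"
  obtains C where "\<And>k n. fact (2*k) + C \<le> n \<Longrightarrow> n + C < fact (2*k+1) \<Longrightarrow> avoids_odd_times F n"
proof -
  obtain C where C: "\<And>\<beta> n m. \<beta> \<in> F \<Longrightarrow> (phi ^^ n) \<beta> = (phi ^^ m) \<alpha>0 \<Longrightarrow> n \<le> m + C \<and> m \<le> n + C"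
    using bounded_meeting_offsets[OF assms \<alpha>0_in] by blast
  have "avoids_odd_times F n" if "fact (2*k) + C \<le> n" "n + C < fact (2*k+1)" for k n
    unfolding avoids_odd_times_def
  proof (intro ballI allI impI)
    fix \<beta> m assume "\<beta> \<in> F" "(phi ^^ n) \<beta> = (phi ^^ m) \<alpha>0"
    then have "fact (2*k) \<le> m" "m < fact (2*k+1)"
      using C that by fastforce+
    then show "\<not> odd_time m"
      by (rule not_odd_time)
  qed
  then show thesis
    using that by blast
qed

lemma exists_late_avoiding_time:
  assumes "finite F" "F \<subseteq> G"
  shows "\<exists>n\<ge>N. avoids_odd_times F n"
proof -
  obtain C where C: "\<And>k n. fact (2*k) + C \<le> n \<Longrightarrow> n + C < fact (2*k+1) \<Longrightarrow> avoids_odd_times F n"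
    using avoids_odd_times_in_even_blocks[OF assms] by blast
  define k where "k = N + C + 1"
  have "2*k \<le> (fact (2*k) :: nat)"
    by (rule fact_ge_self)
  moreover have "fact (2*k+1) = (2*k+1) * (fact (2*k) :: nat)"
    by simp
  ultimately have "fact (2*k) + C + C < fact (2*k+1)" "N \<le> fact (2*k) + C"
    unfolding k_def by (auto simp: algebra_simps intro: order.strict_trans2)
  then show ?thesis
    using C[of k "fact (2*k) + C"] by auto
qed

definition admissible_time :: "nat \<Rightarrow> 'g set \<Rightarrow> nat \<Rightarrow> bool" where
  "admissible_time j U n \<longleftrightarrow> avoids_odd_times (pat_dom j) n \<and> (phi ^^ n) ` pat_dom j \<inter> U = {}"

primrec used :: "nat \<Rightarrow> 'g set" where
  "used 0 = {}"
| "used (Suc j) = used j \<union> (phi ^^ (LEAST n. admissible_time j (used j) n)) ` pat_dom j"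

definition time :: "nat \<Rightarrow> nat" where
  "time j = (LEAST n. admissible_time j (used j) n)"

lemma used_Suc: "used (Suc j) = used j \<union> (phi ^^ time j) ` pat_dom j"
  by (simp add: time_def)

lemma finite_used: "finite (used j)"
  by (induction j) (simp_all add: finite_pat_dom)

lemma used_mono: "j \<le> j' \<Longrightarrow> used j \<subseteq> used j'"
  by (rule lift_Suc_mono_le[of used]) (auto simp: used_Suc)

lemma admissible_time: "admissible_time j (used j) (time j)"
proof -
  obtain N where N: "\<And>n \<beta>. N \<le> n \<Longrightarrow> \<beta> \<in> pat_dom j \<Longrightarrow> (phi ^^ n) \<beta> \<notin> used j"
    using eventually_avoids_finite[OF finite_pat_dom pat_dom_subset finite_used] by blast
  obtain n where "n \<ge> N" "avoids_odd_times (pat_dom j) n"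
    using exists_late_avoiding_time[OF finite_pat_dom pat_dom_subset] by blast
  then have "admissible_time j (used j) n"
    using N unfolding admissible_time_def by blast
  then show ?thesis
    unfolding time_def by (rule LeastI)
qed

definition slots :: "(nat \<times> 'g) set" where
  "slots = (SIGMA j:UNIV. pat_dom j)"

definition place :: "nat \<times> 'g \<Rightarrow> 'g" where
  "place = (\<lambda>(j, \<beta>). (phi ^^ time j) \<beta>)"

lemma place_neq_earlier:
  assumes "j' < j" "\<beta> \<in> pat_dom j" "\<beta>' \<in> pat_dom j'"
  shows "(phi ^^ time j) \<beta> \<noteq> (phi ^^ time j') \<beta>'"
proof -
  have "(phi ^^ time j') \<beta>' \<in> used (Suc j')"
    unfolding used_Suc using assms(3) by blast
  then have "(phi ^^ time j') \<beta>' \<in> used j"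
    using used_mono[of "Suc j'" j] assms(1) by (meson Suc_leI subsetD)
  then show ?thesis
    using admissible_time[of j] assms(2) unfolding admissible_time_def by (metis disjoint_iff image_eqI)
qed

lemma inj_on_place: "inj_on place slots"
proof (rule inj_onI, clarify)
  fix j \<beta> j' \<beta>' assume "(j, \<beta>) \<in> slots" "(j', \<beta>') \<in> slots" "place (j, \<beta>) = place (j', \<beta>')"
  then have slot: "\<beta> \<in> pat_dom j" "\<beta>' \<in> pat_dom j'" and eq: "(phi ^^ time j) \<beta> = (phi ^^ time j') \<beta>'"
    by (auto simp: slots_def place_def)
  then have "j = j'"
    using place_neq_earlier by (metis linorder_neqE_nat)
  with slot eq show "j = j' \<and> \<beta> = \<beta>'"
    using inj_on_funpow[of "time j"] pat_dom_subset by (auto dest: inj_onD)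
qed

text \<open>Every pattern is written at its own place, which \<open>inj_on_place\<close> makes well defined; the
  filler \<open>a\<close> elsewhere is arbitrary.\<close>
definition background :: "'g \<Rightarrow> 'x" where
  "background \<gamma> =
     (if \<gamma> \<in> place ` slots then (case inv_into slots place \<gamma> of (j, \<beta>) \<Rightarrow> pat_word j \<beta>) else a)"

lemma background_place: "\<beta> \<in> pat_dom j \<Longrightarrow> background ((phi ^^ time j) \<beta>) = pat_word j \<beta>"
proof -
  assume "\<beta> \<in> pat_dom j"
  then have "(j, \<beta>) \<in> slots"
    by (simp add: slots_def)
  then show ?thesis
    using inv_into_f_f[OF inj_on_place] unfolding background_def by (force simp: place_def)
qed

lemma background_in: "background \<gamma> \<in> X"
proof (cases "\<gamma> \<in> place ` slots")
  case True
  then obtain j \<beta> where "inv_into slots place \<gamma> = (j, \<beta>)" "\<beta> \<in> pat_dom j"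
    using inv_into_into[of \<gamma> place slots] by (auto simp: slots_def)
  with True show ?thesis
    by (simp add: background_def pat_word_in)
qed (simp add: background_def a_in)

definition symbol :: "(nat \<Rightarrow> bool) \<Rightarrow> nat \<Rightarrow> 'x" where
  "symbol s m = (if s (fst (prod_decode (block_index m))) then a else b)"

definition coded_point :: "(nat \<Rightarrow> bool) \<Rightarrow> 'g \<Rightarrow> 'x" where
  "coded_point s = (\<lambda>\<gamma>\<in>G. if \<exists>m. odd_time m \<and> \<gamma> = (phi ^^ m) \<alpha>0
                    then symbol s (THE m. \<gamma> = (phi ^^ m) \<alpha>0) else background \<gamma>)"

lemma coded_point_in_cube: "coded_point s \<in> cube"
  using a_in b_in background_in by (auto simp: coded_point_def symbol_def)

lemma coded_point_odd_time: "odd_time m \<Longrightarrow> coded_point s ((phi ^^ m) \<alpha>0) = symbol s m"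
  using funpow_in[OF \<alpha>0_in] injD[OF inj_orbit[OF \<alpha>0_in]]
  by (auto simp: coded_point_def intro!: arg_cong[where f = "symbol s"] the_equality)

lemma coded_point_background:
  "\<gamma> \<in> G \<Longrightarrow> (\<And>m. \<gamma> = (phi ^^ m) \<alpha>0 \<Longrightarrow> \<not> odd_time m) \<Longrightarrow> coded_point s \<gamma> = background \<gamma>"
  by (auto simp: coded_point_def)

lemma shift_coded_point:
  "\<beta> \<in> G \<Longrightarrow> (shift_map G phi ^^ n) (coded_point s) \<beta> = coded_point s ((phi ^^ n) \<beta>)"
  using coded_point_in_cube by (simp add: funpow_shift_map PiE_iff)

lemma symbol_differs:
  assumes "s i \<noteq> s' i" "fact (2 * prod_encode (i, j) + 1) \<le> m" "m < fact (2 * prod_encode (i, j) + 2)"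
  shows "symbol s m \<noteq> symbol s' m"
  using assms block_index_eq[OF assms(2,3)] a_neq_b by (auto simp: symbol_def)

lemma shifted_coded_points_agree:
  assumes "avoids_odd_times F n" "F \<subseteq> G" "\<beta> \<in> F"
  shows "(shift_map G phi ^^ n) (coded_point s) \<beta> = (shift_map G phi ^^ n) (coded_point s') \<beta>"
proof -
  have "coded_point s'' ((phi ^^ n) \<beta>) = background ((phi ^^ n) \<beta>)" for s''
    using assms funpow_in by (intro coded_point_background) (auto simp: avoids_odd_times_def)
  then show ?thesis
    using assms(2,3) by (auto simp: shift_coded_point)
qed

lemma coded_point_realizes_pattern: "\<beta> \<in> pat_dom j \<Longrightarrow> coded_point s ((phi ^^ time j) \<beta>) = pat_word j \<beta>"
  using admissible_time[of j] pat_dom_subset funpow_in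
  by (subst coded_point_background) (auto simp: admissible_time_def avoids_odd_times_def background_place)

lemma inj_coded_point: "inj coded_point"
proof (rule injI, rule ccontr)
  fix s s' assume eq: "coded_point s = coded_point s'" and "s \<noteq> s'"
  then obtain i where i: "s i \<noteq> s' i"
    by blast
  define m :: nat where "m = fact (2 * prod_encode (i, 0) + 1)"
  have "odd_time m"
    unfolding m_def by (rule odd_timeI) auto
  moreover have "symbol s m \<noteq> symbol s' m"
    using symbol_differs[of s i s' 0 m] i unfolding m_def by simp
  ultimately show False
    using eq coded_point_odd_time by metis
qed

lemma transitive_coded_point: "transitive_point prod_top (shift_map G phi) (coded_point s)"
  unfolding transitive_point_def
proof (rule antisym[OF closure_of_subset_topspace], rule subsetI)
  fix w assume w: "w \<in> topspace prod_top"
  show "w \<in> prod_top closure_of {(shift_map G phi ^^ n) (coded_point s) | n. True}"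
    unfolding in_closure_of
  proof (intro conjI allI impI w)
    fix T assume "w \<in> T \<and> openin prod_top T"
    then obtain F where F: "finite F" "F \<subseteq> G" "cylinder w F \<subseteq> T"
      using open_contains_cylinder by metis
    have "(F, restrict w F) \<in> patterns"
      using F w by (auto simp: patterns_def PiE_iff)
    then obtain j where j: "pattern j = (F, restrict w F)"
      using pattern_surj by blast
    have "(shift_map G phi ^^ time j) (coded_point s) \<in> cylinder w F"
      using j F coded_point_realizes_pattern[of _ j s] funpow_shift_map_in[OF coded_point_in_cube]
      by (auto simp: cylinder_def shift_coded_point)
    then show "\<exists>y. y \<in> {(shift_map G phi ^^ n) (coded_point s) | n. True} \<and> y \<in> T"
      using F(3) by blast
  qed
qed

lemma close_fraction_in_even_blocks:
  assumes "t > 0"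
  obtains K where "\<And>k. K \<le> k \<Longrightarrow> (2 * real k - 1) / (2 * real k + 1) \<le>
    real (xi d (shift_map G phi) (coded_point s) (coded_point s') t (fact (2*k+1))) / real (fact (2*k+1))"
proof -
  let ?f = "shift_map G phi"
  obtain F where F: "finite F" "F \<subseteq> G"
    and close: "\<And>x y. x \<in> cube \<Longrightarrow> y \<in> cube \<Longrightarrow> (\<forall>i\<in>F. x i = y i) \<Longrightarrow> d x y < t"
    using agreement_imp_dist_less[OF assms] by blast
  obtain C where C: "\<And>k n. fact (2*k) + C \<le> n \<Longrightarrow> n + C < fact (2*k+1) \<Longrightarrow> avoids_odd_times F n"
    using avoids_odd_times_in_even_blocks[OF F] by blast
  have "(2 * real k - 1) / (2 * real k + 1) \<le>
      real (xi d ?f (coded_point s) (coded_point s') t (fact (2*k+1))) / real (fact (2*k+1))"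
    if "max C 1 \<le> k" for k
  proof -
    define N :: nat where "N = fact (2*k)"
    have "2*k \<le> N" "0 < N"
      unfolding N_def by (simp_all add: fact_ge_self)
    have N1: "fact (2*k+1) = (2*k+1) * N"
      unfolding N_def by simp
    have "card {N + C ..< (2*k+1)*N - C} \<le> xi d ?f (coded_point s) (coded_point s') t (fact (2*k+1))"
    proof (rule card_le_xi)
      fix n assume "n \<in> {N + C ..< (2*k+1)*N - C}"
      then have "fact (2*k) + C \<le> n" "n + C < fact (2*k+1)"
        unfolding N1 N_def by auto
      then have "avoids_odd_times F n"
        by (rule C)
      then show "d ((?f ^^ n) (coded_point s)) ((?f ^^ n) (coded_point s')) < t"
        using F shifted_coded_points_agree funpow_shift_map_in[OF coded_point_in_cube] by (intro close) auto
    qed (use N1 in auto)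
    moreover have "(2*k - 1) * N \<le> card {N + C ..< (2*k+1)*N - C}"
      using \<open>2*k \<le> N\<close> that by (simp add: algebra_simps diff_mult_distrib diff_le_mono2)
    ultimately have "real ((2*k - 1) * N) \<le> real (xi d ?f (coded_point s) (coded_point s') t (fact (2*k+1)))"
      by linarith
    then have "real ((2*k - 1) * N) / real ((2*k+1) * N) \<le>
        real (xi d ?f (coded_point s) (coded_point s') t (fact (2*k+1))) / real (fact (2*k+1))"
      unfolding N1 by (intro divide_right_mono) auto
    moreover have "real ((2*k - 1) * N) / real ((2*k+1) * N) = real (2*k - 1) / real (2*k+1)"
      using \<open>0 < N\<close> by (simp only: of_nat_mult mult_divide_mult_cancel_right)
    moreover have "real (2*k - 1) = 2 * real k - 1"
      using that by (simp add: of_nat_diff)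
    ultimately show ?thesis
      by (simp add: add.commute)
  qed
  then show thesis
    by (rule that)
qed

lemma far_fraction_in_coding_blocks:
  assumes "s i \<noteq> s' i"
    and separated: "\<And>x y. x \<in> cube \<Longrightarrow> y \<in> cube \<Longrightarrow> x \<alpha>0 \<noteq> y \<alpha>0 \<Longrightarrow> r \<le> d x y"
  shows "real (xi d (shift_map G phi) (coded_point s) (coded_point s') r (fact (2 * prod_encode (i, j) + 2)))
      / real (fact (2 * prod_encode (i, j) + 2)) \<le> 1 / (real j + 1)"
proof -
  let ?f = "shift_map G phi"
  define k where "k = prod_encode (i, j)"
  define N :: nat where "N = fact (2*k+1)"
  have N2: "fact (2*k+2) = (2*k+2) * N" and "0 < N"
    unfolding N_def by simp_all
  have "xi d ?f (coded_point s) (coded_point s') r (fact (2*k+2)) \<le> card {..<N}"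
  proof (rule xi_le_card)
    fix n assume n: "n < fact (2*k+2)" "d ((?f ^^ n) (coded_point s)) ((?f ^^ n) (coded_point s')) < r"
    show "n \<in> {..<N}"
    proof (rule ccontr)
      assume "n \<notin> {..<N}"
      then have block: "fact (2 * prod_encode (i, j) + 1) \<le> n" "n < fact (2 * prod_encode (i, j) + 2)"
        using n(1) unfolding N_def k_def by auto
      then have "(?f ^^ n) (coded_point s) \<alpha>0 \<noteq> (?f ^^ n) (coded_point s') \<alpha>0"
        using symbol_differs[of s i s' j n] assms(1) odd_timeI[OF block] \<alpha>0_in
        by (simp add: shift_coded_point coded_point_odd_time)
      then show False
        using n(2) separated funpow_shift_map_in[OF coded_point_in_cube] by (meson not_le)
    qed
  qed simp
  then have "real (xi d ?f (coded_point s) (coded_point s') r (fact (2*k+2))) / real (fact (2*k+2))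
      \<le> real N / real ((2*k+2) * N)"
    unfolding N2 by (intro divide_right_mono) auto
  also have "\<dots> = 1 / real (2*k+2)"
    using \<open>0 < N\<close> by (simp only: of_nat_mult) simp
  also have "\<dots> \<le> 1 / (real j + 1)"
    using le_prod_encode_2[of j i] unfolding k_def by (intro divide_left_mono) auto
  finally show ?thesis
    unfolding k_def .
qed

lemma F_upper_coded_points:
  assumes "t > 0"
  shows "F_upper d (shift_map G phi) (coded_point s) (coded_point s') t = 1"
proof -
  define u where "u n = real (xi d (shift_map G phi) (coded_point s) (coded_point s') t n) / real n" for n
  obtain K where K: "\<And>k. K \<le> k \<Longrightarrow> (2 * real k - 1) / (2 * real k + 1) \<le> u (fact (2*k+1))"
    using close_fraction_in_even_blocks[OF assms] unfolding u_def by blast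
  have lower: "eventually (\<lambda>k. (2 * real k - 1) / (2 * real k + 1) \<le> u (fact (2*k+1))) sequentially"
    using eventually_ge_at_top[of K] by (rule eventually_mono) (rule K)
  have u_le_1: "u n \<le> 1" for n
    unfolding u_def by (rule xi_ratio_le_1)
  then have upper: "eventually (\<lambda>k. u (fact (2*k+1)) \<le> 1) sequentially"
    by simp
  have "(\<lambda>k. (2 * real k - 1) / (2 * real k + 1)) \<longlonglongrightarrow> 1"
    by real_asymp
  then have "(\<lambda>k. u (fact (2*k+1))) \<longlonglongrightarrow> 1"
    by (rule tendsto_sandwich[OF lower upper _ tendsto_const])
  then show ?thesis
    unfolding F_upper_def
    using limsup_ereal_eq_if_subseq_tendsto[OF u_le_1 strict_mono_fact_odd] by (simp add: u_def)
qed

lemma F_lower_coded_points: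
  assumes "s \<noteq> s'"
    and separated: "\<And>x y. x \<in> cube \<Longrightarrow> y \<in> cube \<Longrightarrow> x \<alpha>0 \<noteq> y \<alpha>0 \<Longrightarrow> r \<le> d x y"
  shows "F_lower d (shift_map G phi) (coded_point s) (coded_point s') r = 0"
proof -
  obtain i where i: "s i \<noteq> s' i"
    using assms(1) by blast
  define u where "u n = real (xi d (shift_map G phi) (coded_point s) (coded_point s') r n) / real n" for n
  have upper: "eventually (\<lambda>j. u (fact (2 * prod_encode (i, j) + 2)) \<le> 1 / (real j + 1)) sequentially"
    using far_fraction_in_coding_blocks[of s i s' r, OF i separated] by (simp add: u_def)
  have u_ge_0: "0 \<le> u n" for n
    by (simp add: u_def)
  then have lower: "eventually (\<lambda>j. 0 \<le> u (fact (2 * prod_encode (i, j) + 2))) sequentially"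
    by simp
  have "(\<lambda>j. 1 / (real j + 1)) \<longlonglongrightarrow> 0"
    by real_asymp
  then have "(\<lambda>j. u (fact (2 * prod_encode (i, j) + 2))) \<longlonglongrightarrow> 0"
    by (rule tendsto_sandwich[OF lower upper tendsto_const])
  then show ?thesis
    unfolding F_lower_def
    using liminf_ereal_eq_if_subseq_tendsto[OF u_ge_0 strict_mono_fact_coding_block] by (simp add: u_def)
qed

lemma uncountable_scrambled_transitive_set:
  "\<exists>M. M \<subseteq> cube \<and> uncountable M \<and> (\<forall>x\<in>M. transitive_point prod_top (shift_map G phi) x)
     \<and> (\<exists>r>0. \<forall>x\<in>M. \<forall>y\<in>M. x \<noteq> y \<longrightarrow>
           (\<forall>t>0. F_upper d (shift_map G phi) x y t = 1) \<and> F_lower d (shift_map G phi) x y r = 0)"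
proof -
  obtain r where "r > 0" and separated: "\<And>x y. x \<in> cube \<Longrightarrow> y \<in> cube \<Longrightarrow> x \<alpha>0 \<noteq> y \<alpha>0 \<Longrightarrow> r \<le> d x y"
    using coordinate_separation[OF \<alpha>0_in] by blast
  show ?thesis
  proof (intro exI[of _ "range coded_point"] conjI)
    show "range coded_point \<subseteq> cube"
      using coded_point_in_cube by blast
    show "uncountable (range coded_point)"
    proof
      assume "countable (range coded_point)"
      then have "countable (UNIV :: (nat \<Rightarrow> bool) set)"
        by (rule countable_image_inj_on) (rule inj_coded_point)
      with uncountable_UNIV_nat_bool show False ..
    qed
    show "\<forall>x\<in>range coded_point. transitive_point prod_top (shift_map G phi) x"
      using transitive_coded_point by blast
    show "\<exists>r>0. \<forall>x\<in>range coded_point. \<forall>y\<in>range coded_point. x \<noteq> y \<longrightarrow>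
        (\<forall>t>0. F_upper d (shift_map G phi) x y t = 1) \<and> F_lower d (shift_map G phi) x y r = 0"
    proof (intro exI[of _ r] conjI ballI impI allI \<open>r > 0\<close>)
      fix x y assume "x \<in> range coded_point" "y \<in> range coded_point" "x \<noteq> y"
      then obtain s s' where "x = coded_point s" "y = coded_point s'" "s \<noteq> s'"
        by blast
      then show "F_lower d (shift_map G phi) x y r = 0" "\<And>t. t > 0 \<Longrightarrow> F_upper d (shift_map G phi) x y t = 1"
        using F_lower_coded_points[OF _ separated] F_upper_coded_points by simp_all
    qed
  qed
qed

end

theorem lemma5p2:
  fixes X :: "'x set" and G :: "'g set" and phi :: "'g \<Rightarrow> 'g"
    and d :: "('g \<Rightarrow> 'x) \<Rightarrow> ('g \<Rightarrow> 'x) \<Rightarrow> real"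
  assumes "finite X" and "card X \<ge> 2"
    and "countable G" and "G \<noteq> {}"
    and "phi ` G \<subseteq> G" and "inj_on phi G"
    and "\<forall>\<alpha>\<in>G. \<forall>n::nat. n \<ge> 1 \<longrightarrow> (phi ^^ n) \<alpha> \<noteq> \<alpha>"
    and "Metric_space (PiE G (\<lambda>_. X)) d"
    and "Metric_space.mtopology (PiE G (\<lambda>_. X)) d
           = product_topology (\<lambda>_. discrete_topology X) G"
  shows "\<exists>M. M \<subseteq> PiE G (\<lambda>_. X) \<and> uncountable M
           \<and> (\<forall>x\<in>M. transitive_point (product_topology (\<lambda>_. discrete_topology X) G)
                                      (shift_map G phi) x)
           \<and> (\<exists>r>0. \<forall>x\<in>M. \<forall>y\<in>M. x \<noteq> y \<longrightarrow>
                 (\<forall>t>0. F_upper d (shift_map G phi) x y t = 1)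
                 \<and> F_lower d (shift_map G phi) x y r = 0)"
proof -
  obtain \<alpha>0 where "\<alpha>0 \<in> G"
    using assms(4) by blast
  obtain a B where "X = insert a B" "a \<notin> B" "1 \<le> card B"
    using assms(2) card_le_Suc_iff[of 1 X] by auto
  then obtain b where "a \<in> X" "b \<in> X" "a \<noteq> b"
    by (metis card.empty ex_in_conv insert_iff not_one_le_zero)
  interpret orbit_coding G phi X d \<alpha>0 a b
    using assms \<open>\<alpha>0 \<in> G\<close> \<open>a \<in> X\<close> \<open>b \<in> X\<close> \<open>a \<noteq> b\<close>
    by (simp add: orbit_coding_def orbit_coding_axioms_def aperiodic_injection_def
        discrete_product_metric_def discrete_product_metric_axioms_def)
  show ?thesis
    using uncountable_scrambled_transitive_set by simp
qed

end
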